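(* The relation $\to_{\lambda j}$ is confluent: for all $\lambda j$-terms $t,u_1,u_2$ with $t\to^*_{\lambda j}u_1$ and $t\to^*_{\lambda j}u_2$, there exists $v$ with $u_1\to^*_{\lambda j}v$ and $u_2\to^*_{\lambda j}v$.
   Context: $\lambda j$-terms are generated by $t,u::= x\mid \lambda x.t\mid t\,u\mid t[x/u]$ ($x$ ranging over variables); $\lambda x.t$ and $t[x/u]$ bind $x$ in $t$ (not in $u$), and terms are considered modulo $\alpha$-conversion. $\mathrm{fv}(t)$ is the set of free variables, $t\{x/u\}$ is capture-avoiding meta-level substitution, and $|t|_x$ is the number of free occurrences of $x$ in $t$. If $|t|_x=n\ge2$, $t_{[y]_x}$ denotes any term obtained from $t$ by replacing $k$ of the free occurrences of $x$ by a fresh variable $y$, for some $1\le k\le n-1$. ${\tt L}$ denotes a (possibly empty) list of jumps $[x_1/u_1]\dots[x_k/u_k]$. The rewriting rules, closed under all contexts, are: $({\tt dB})$ $(\lambda x.t){\tt L}\,u\to t[x/u]{\tt L}$ where no $x_i$ of ${\tt L}$ is free in $u$; $({\tt w})$ $t[x/u]\to t$ if $|t|_x=0$; $({\tt d})$ $t[x/u]\to t\{x/u\}$ if $|t|_x=1$; $({\tt c})$ $t[x/u]\to t_{[y]_x}[x/u][y/u]$ if $|t|_x\ge2$, $y$ fresh. $\to_{\lambda j}$ is the union of all four. *)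

theory Defs
  imports Main
begin

text \<open>lambda-j terms modulo alpha-conversion, represented with de Bruijn indices.
  Lam t binds index 0 in t; Sub t u is the jump t[x/u], binding index 0 in t
  (but not in u).\<close>

datatype trm = Var nat | Lam trm | App trm trm | Sub trm trm

primrec lift :: "nat \<Rightarrow> trm \<Rightarrow> trm" where
  "lift c (Var i) = (if i < c then Var i else Var (Suc i))"
| "lift c (Lam t) = Lam (lift (Suc c) t)"
| "lift c (App t u) = App (lift c t) (lift c u)"
| "lift c (Sub t u) = Sub (lift (Suc c) t) (lift c u)"

text \<open>Capture-avoiding meta-level substitution of u for index k
  (indices above k are decremented, as the binder of k disappears).\<close>
primrec subst :: "trm \<Rightarrow> nat \<Rightarrow> trm \<Rightarrow> trm" where
  "subst (Var i) k u = (if k < i then Var (i - 1) else if i = k then u else Var i)"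
| "subst (Lam t) k u = Lam (subst t (Suc k) (lift 0 u))"
| "subst (App t s) k u = App (subst t k u) (subst s k u)"
| "subst (Sub t s) k u = Sub (subst t (Suc k) (lift 0 u)) (subst s k u)"

primrec occ :: "nat \<Rightarrow> trm \<Rightarrow> nat" where
  "occ d (Var i) = (if i = d then 1 else 0)"
| "occ d (Lam t) = occ (Suc d) t"
| "occ d (App t u) = occ d t + occ d u"
| "occ d (Sub t u) = occ (Suc d) t + occ d u"

text \<open>A list of jumps L = [x1/u1]...[xk/uk] applied to a term (u1 innermost).\<close>
definition jumps :: "trm \<Rightarrow> trm list \<Rightarrow> trm" where
  "jumps t L = foldl Sub t L"

inductive ren :: "nat \<Rightarrow> trm \<Rightarrow> trm \<Rightarrow> bool" where
  ren_keep: "ren d (Var i) (Var i)"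
| ren_move: "ren d (Var d) (Var (Suc d))"
| ren_lam: "ren (Suc d) t t' \<Longrightarrow> ren d (Lam t) (Lam t')"
| ren_app: "ren d t t' \<Longrightarrow> ren d u u' \<Longrightarrow> ren d (App t u) (App t' u')"
| ren_sub: "ren (Suc d) t t' \<Longrightarrow> ren d u u' \<Longrightarrow> ren d (Sub t u) (Sub t' u')"

text \<open>split t t': t' is t_{[y]_x} where x is index 0 and the fresh y is index 1
  (the remaining free indices of t being shifted up by one to make room for y):
  at least one, but not all, occurrences of x are renamed to y.\<close>
definition split :: "trm \<Rightarrow> trm \<Rightarrow> bool" where
  "split t t' \<longleftrightarrow> ren 0 (lift 1 t) t' \<and> occ 0 t' \<ge> 1 \<and> occ 1 t' \<ge> 1"

inductive lj :: "trm \<Rightarrow> trm \<Rightarrow> bool" where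
  dB: "lj (App (jumps (Lam t) L) u) (jumps (Sub t ((lift 0 ^^ length L) u)) L)"
| w: "occ 0 t = 0 \<Longrightarrow> lj (Sub t u) (subst t 0 u)"
| d: "occ 0 t = 1 \<Longrightarrow> lj (Sub t u) (subst t 0 u)"
| c: "occ 0 t \<ge> 2 \<Longrightarrow> split t t' \<Longrightarrow> lj (Sub t u) (Sub (Sub t' (lift 0 u)) u)"
| lam: "lj t t' \<Longrightarrow> lj (Lam t) (Lam t')"
| appL: "lj t t' \<Longrightarrow> lj (App t u) (App t' u)"
| appR: "lj u u' \<Longrightarrow> lj (App t u) (App t u')"
| subL: "lj t t' \<Longrightarrow> lj (Sub t u) (Sub t' u)"
| subR: "lj u u' \<Longrightarrow> lj (Sub t u) (Sub t u')"

end

theory Submission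
  imports Defs "HOL-Library.Confluence"
begin

(* Confluence of lambda-j by interpretation into the lambda-calculus.

   The unfolding unf t executes every jump of t as a meta-level substitution, giving
   a pure lambda-term.  Three facts relate lambda-j to parallel beta-reduction par:
     (a) t reduces to unf t (a jump t[x/u] is fully executed by c, d and w steps,
         by induction on the number of occurrences of x);
     (b) every lambda-j step is mapped by unf to a sequence of par steps
         (dB becomes a beta-step, the jump rules become identities);
     (c) every par step is simulated by lambda-j steps (beta = dB followed by (a)).
   Parallel reduction has the diamond property via Takahashi's complete development
   cd, hence is confluent; an abstract lemma (confluentp_by_interpretation) then
   transfers confluence along (a)-(c). *)

section \<open>Lifting and substitution\<close>

lemma lift_lift:
  "i \<le> k \<Longrightarrow> lift (Suc k) (lift i t) = lift i (lift k t)"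
  by (induct t arbitrary: i k) auto

lemma lift_subst:
  "j \<le> i \<Longrightarrow> lift i (subst t j s) = subst (lift (Suc i) t) j (lift i s)"
  by (induct t arbitrary: i j s) (simp_all add: diff_Suc lift_lift split: nat.split)

lemma lift_subst_lt:
  "i \<le> j \<Longrightarrow> lift i (subst t j s) = subst (lift i t) (Suc j) (lift i s)"
  by (induct t arbitrary: i j s) (simp_all add: diff_Suc lift_lift split: nat.split)

lemma subst_lift [simp]: "subst (lift k t) k s = t"
  by (induct t arbitrary: k s) auto

lemma subst_subst:
  "i \<le> j \<Longrightarrow> subst (subst t (Suc j) (lift i v)) i (subst u j v) = subst (subst t i u) j v"
  by (induct t arbitrary: i j u v)
    (simp_all add: diff_Suc lift_lift [symmetric] lift_subst_lt split: nat.split)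

lemma subst_identify: "subst t k (Var k) = subst t (Suc k) (Var k)"
  by (induct t arbitrary: k) auto

text \<open>Duplication: substituting w for two adjacent indices 0 and 1 is the same as
  first identifying them and then substituting once.  This is the meaning of the c-rule.\<close>
lemma subst_duplicate:
  "subst (subst t 0 (lift 0 w)) 0 w = subst (subst t 1 (Var 0)) 0 w"
proof -
  have "subst (subst t 0 (lift 0 w)) 0 w = subst (subst t 1 (lift 0 w)) 0 (subst (lift 0 w) 0 w)"
    using subst_subst[of 0 0 t w "lift 0 w"] by simp
  also have "\<dots> = subst (subst t 1 (lift 0 w)) 0 (subst (Var 0) 0 w)" by simp
  also have "\<dots> = subst (subst t 0 (Var 0)) 0 w"
    using subst_subst[of 0 0 t w "Var 0"] by simp
  finally show ?thesis by (simp add: subst_identify)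
qed

section \<open>Occurrences and the splitting of the c-rule\<close>

lemma occ_lift_self: "occ d (lift d t) = 0"
  by (induct t arbitrary: d) auto

lemma occ_lift_above: "occ d (lift (Suc d) t) = occ d t"
  by (induct t arbitrary: d) auto

lemma occ_subst: "occ d (subst t d (lift d w)) = occ (Suc d) t"
  by (induct t arbitrary: d w) (auto simp: occ_lift_self lift_lift[of 0, symmetric])

lemma occ_ren: "ren d s s' \<Longrightarrow> occ d s' + occ (Suc d) s' = occ d s + occ (Suc d) s"
  by (induct rule: ren.induct) auto

lemma ren_collapse: "ren d (lift (Suc d) t) s' \<Longrightarrow> subst s' (Suc d) (Var d) = t"
proof (induct d "lift (Suc d) t" s' arbitrary: t rule: ren.induct)
  case (ren_keep d i) thus ?case by (cases t) (auto split: if_splits)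
next
  case (ren_move d) thus ?case by (cases t) (auto split: if_splits)
next
  case (ren_lam d t1 t2) thus ?case by (cases t) (auto split: if_splits)
next
  case (ren_app d t1 t2 u1 u2) thus ?case by (cases t) (auto split: if_splits)
next
  case (ren_sub d t1 t2 u1 u2) thus ?case by (cases t) (auto split: if_splits)
qed

lemma split_collapse: "split t t' \<Longrightarrow> t = subst t' 1 (Var 0)"
  using ren_collapse[of 0 t t'] by (simp add: split_def)

lemma ren_exists: "k \<le> occ d s \<Longrightarrow> \<exists>s'. ren d s s' \<and> occ (Suc d) s' = occ (Suc d) s + k"
proof (induct s arbitrary: d k)
  case (Var i)
  show ?case
  proof (cases "k = 0")
    case True thus ?thesis by (auto intro: ren_keep)
  next
    case False
    with Var have "i = d" "k = 1" by (auto split: if_splits)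
    thus ?thesis by (auto intro!: exI[of _ "Var (Suc d)"] ren_move)
  qed
next
  case (Lam t)
  then obtain t' where "ren (Suc d) t t'" "occ (Suc (Suc d)) t' = occ (Suc (Suc d)) t + k"
    by force
  thus ?case by (auto intro: ren_lam)
next
  case (App t u)
  define k1 where "k1 = min k (occ d t)"
  have "k1 \<le> occ d t" "k - k1 \<le> occ d u" using App.prems by (auto simp: k1_def)
  then obtain t' u' where "ren d t t'" "occ (Suc d) t' = occ (Suc d) t + k1"
     "ren d u u'" "occ (Suc d) u' = occ (Suc d) u + (k - k1)" using App.hyps by meson
  thus ?case using App.prems by (auto intro!: exI[of _ "App t' u'"] ren_app simp: k1_def)
next
  case (Sub t u)
  define k1 where "k1 = min k (occ (Suc d) t)"
  have "k1 \<le> occ (Suc d) t" "k - k1 \<le> occ d u" using Sub.prems by (auto simp: k1_def)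
  then obtain t' u' where "ren (Suc d) t t'" "occ (Suc (Suc d)) t' = occ (Suc (Suc d)) t + k1"
     "ren d u u'" "occ (Suc d) u' = occ (Suc d) u + (k - k1)" using Sub.hyps by meson
  thus ?case using Sub.prems by (auto intro!: exI[of _ "Sub t' u'"] ren_sub simp: k1_def)
qed

lemma split_exists:
  assumes "occ 0 t \<ge> 2"
  obtains t' where "split t t'" "occ 1 t' = 1" "occ 0 t' < occ 0 t"
proof -
  have "1 \<le> occ 0 (lift 1 t)" using assms occ_lift_above[of 0 t] by simp
  from ren_exists[OF this] obtain t' where
    r: "ren 0 (lift 1 t) t'" and o: "occ 1 t' = occ 1 (lift 1 t) + 1"
    by auto
  have o1: "occ 1 t' = 1" using o occ_lift_self[of 1 t] by simp
  have total: "occ 0 t' + occ 1 t' = occ 0 t"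
    using occ_ren[OF r] occ_lift_above[of 0 t] occ_lift_self[of 1 t] by simp
  show ?thesis using that[of t'] r o1 total assms unfolding split_def by simp
qed

section \<open>Abstract rewriting\<close>

lemma rtranclp_map:
  assumes step: "\<And>x y. R x y \<Longrightarrow> S\<^sup>*\<^sup>* (f x) (f y)" and "R\<^sup>*\<^sup>* x y"
  shows "S\<^sup>*\<^sup>* (f x) (f y)"
  using assms(2) by (induct rule: rtranclp_induct) (auto dest: step intro: rtranclp_trans)

lemma rtranclp_map2:
  assumes "\<And>x x' y. R x x' \<Longrightarrow> S\<^sup>*\<^sup>* (f x y) (f x' y)"
    and "\<And>x y y'. R y y' \<Longrightarrow> S\<^sup>*\<^sup>* (f x y) (f x y')"
    and "R\<^sup>*\<^sup>* x x'" and "R\<^sup>*\<^sup>* y y'"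
  shows "S\<^sup>*\<^sup>* (f x y) (f x' y')"
proof -
  have "S\<^sup>*\<^sup>* (f x y) (f x' y)" using rtranclp_map[of R S "\<lambda>x. f x y"] assms by blast
  also have "S\<^sup>*\<^sup>* (f x' y) (f x' y')" using rtranclp_map[of R S "f x'"] assms by blast
  finally show ?thesis .
qed

lemma confluentp_by_interpretation:
  assumes conf: "confluentp S"
    and to_image: "\<And>t. R\<^sup>*\<^sup>* t (f t)"
    and simulate: "\<And>t s. R t s \<Longrightarrow> S\<^sup>*\<^sup>* (f t) (f s)"
    and reflect: "\<And>t s. S t s \<Longrightarrow> R\<^sup>*\<^sup>* t s"
  shows "confluentp R"
proof (rule confluentpI)
  fix t u1 u2 assume "R\<^sup>*\<^sup>* t u1" "R\<^sup>*\<^sup>* t u2"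
  then have "S\<^sup>*\<^sup>* (f t) (f u1)" "S\<^sup>*\<^sup>* (f t) (f u2)"
    using rtranclp_map[of R S f, OF simulate] by blast+
  then obtain v where "S\<^sup>*\<^sup>* (f u1) v" "S\<^sup>*\<^sup>* (f u2) v" using conf by (blast dest: confluentpD)
  then have "R\<^sup>*\<^sup>* (f u1) v" "R\<^sup>*\<^sup>* (f u2) v"
    using rtranclp_map[of S R id, OF reflect] by simp_all
  then show "\<exists>v. R\<^sup>*\<^sup>* u1 v \<and> R\<^sup>*\<^sup>* u2 v" using to_image by (blast intro: rtranclp_trans)
qed

section \<open>Lambda-j reduction and unfolding\<close>

lemma lj_lam_star: "lj\<^sup>*\<^sup>* t t' \<Longrightarrow> lj\<^sup>*\<^sup>* (Lam t) (Lam t')"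
  by (rule rtranclp_map[of lj]) (auto intro: lj.lam)

lemma lj_app_star: "lj\<^sup>*\<^sup>* t t' \<Longrightarrow> lj\<^sup>*\<^sup>* u u' \<Longrightarrow> lj\<^sup>*\<^sup>* (App t u) (App t' u')"
  by (rule rtranclp_map2[of lj]) (auto intro: lj.appL lj.appR)

lemma lj_sub_star: "lj\<^sup>*\<^sup>* t t' \<Longrightarrow> lj\<^sup>*\<^sup>* u u' \<Longrightarrow> lj\<^sup>*\<^sup>* (Sub t u) (Sub t' u')"
  by (rule rtranclp_map2[of lj]) (auto intro: lj.subL lj.subR)

text \<open>Induction on
  the occurrences of x; with two or more, one c-step splits off a single occurrence y,
  the inner jump (fewer occurrences of x) and then the outer one (y now occurs once)
  are executed, and subst_duplicate identifies the result.\<close>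
lemma sub_executes: "lj\<^sup>*\<^sup>* (Sub t u) (subst t 0 u)"
proof (induct "occ 0 t" arbitrary: t u rule: less_induct)
  case less
  show ?case
  proof (cases "occ 0 t \<ge> 2")
    case False
    then consider "occ 0 t = 0" | "occ 0 t = 1" by linarith
    thus ?thesis by cases (metis lj.w lj.d r_into_rtranclp)+
  next
    case True
    then obtain t' where sp: "split t t'" and once: "occ 1 t' = 1" and fewer: "occ 0 t' < occ 0 t"
      by (rule split_exists)
    have "lj (Sub t u) (Sub (Sub t' (lift 0 u)) u)" using True sp by (rule lj.c)
    also have "lj\<^sup>*\<^sup>* \<dots> (Sub (subst t' 0 (lift 0 u)) u)"
      using less fewer by (blast intro: lj_sub_star)
    also have "lj\<^sup>*\<^sup>* \<dots> (subst (subst t' 0 (lift 0 u)) 0 u)"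
      using less True occ_subst[of 0 t' u] once by simp
    also have "subst (subst t' 0 (lift 0 u)) 0 u = subst t 0 u"
      using subst_duplicate split_collapse[OF sp] by simp
    finally show ?thesis .
  qed
qed

primrec unf :: "trm \<Rightarrow> trm" where
  "unf (Var i) = Var i"
| "unf (Lam t) = Lam (unf t)"
| "unf (App t u) = App (unf t) (unf u)"
| "unf (Sub t u) = subst (unf t) 0 (unf u)"

lemma lj_unf: "lj\<^sup>*\<^sup>* t (unf t)"
proof (induct t)
  case (Sub t u)
  have "lj\<^sup>*\<^sup>* (Sub t u) (Sub (unf t) (unf u))" using Sub by (rule lj_sub_star)
  also have "lj\<^sup>*\<^sup>* \<dots> (unf (Sub t u))" by (simp add: sub_executes)
  finally show ?case .
qed (auto intro: lj_lam_star lj_app_star)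

lemma unf_lift: "unf (lift k t) = lift k (unf t)"
  by (induct t arbitrary: k) (simp_all add: lift_subst)

lemma unf_subst: "unf (subst t k u) = subst (unf t) k (unf u)"
proof (induct t arbitrary: k u)
  case (Sub t s)
  thus ?case using subst_subst[of 0 k "unf t" "unf u" "unf s"] by (simp add: unf_lift)
qed (simp_all add: unf_lift)

text \<open>Unfolding a redex of the dB-rule at a distance: the jumps L unfold to a
  substitution inside the abstraction body, and the dB-contractum unfolds to the
  beta-contractum of the unfolded redex.\<close>
lemma unf_jumps:
  "\<exists>X. unf (jumps (Lam t) L) = Lam X \<and>
     (\<forall>u. unf (jumps (Sub t ((lift 0 ^^ length L) u)) L) = subst X 0 (unf u))"
proof (induct L rule: rev_induct)
  case Nil thus ?case by (simp add: jumps_def)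
next
  case (snoc v L)
  then obtain X where X_lam: "unf (jumps (Lam t) L) = Lam X"
    and X_sub: "\<And>u. unf (jumps (Sub t ((lift 0 ^^ length L) u)) L) = subst X 0 (unf u)" by blast
  show ?case
  proof (intro exI conjI allI)
    show "unf (jumps (Lam t) (L @ [v])) = Lam (subst X 1 (lift 0 (unf v)))"
      using X_lam by (simp add: jumps_def)
    fix u
    have "unf (jumps (Sub t ((lift 0 ^^ length (L @ [v])) u)) (L @ [v]))
       = subst (unf (jumps (Sub t ((lift 0 ^^ length L) (lift 0 u))) L)) 0 (unf v)"
      by (simp add: jumps_def funpow_Suc_right del: funpow.simps)
    also have "\<dots> = subst (subst X 0 (lift 0 (unf u))) 0 (unf v)" by (simp add: X_sub unf_lift)
    also have "\<dots> = subst (subst X 1 (lift 0 (unf v))) 0 (unf u)"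
      using subst_subst[of 0 0 X "unf v" "lift 0 (unf u)"] by simp
    finally show "unf (jumps (Sub t ((lift 0 ^^ length (L @ [v])) u)) (L @ [v]))
       = subst (subst X 1 (lift 0 (unf v))) 0 (unf u)" .
  qed
qed

section \<open>Parallel beta-reduction\<close>

text \<open>Parallel reduction contracts any set of beta-redexes simultaneously; jumps are
  treated as an inert constructor (only the unfoldings, which contain none, matter).\<close>
inductive par :: "trm \<Rightarrow> trm \<Rightarrow> bool" where
  pvar: "par (Var i) (Var i)"
| plam: "par t t' \<Longrightarrow> par (Lam t) (Lam t')"
| papp: "par t t' \<Longrightarrow> par u u' \<Longrightarrow> par (App t u) (App t' u')"
| psub: "par t t' \<Longrightarrow> par u u' \<Longrightarrow> par (Sub t u) (Sub t' u')"
| pbeta: "par t t' \<Longrightarrow> par u u' \<Longrightarrow> par (App (Lam t) u) (subst t' 0 u')"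

lemma par_refl [simp, intro]: "par t t"
  by (induct t) (auto intro: par.intros)

lemma par_lift: "par t t' \<Longrightarrow> par (lift k t) (lift k t')"
proof (induct arbitrary: k rule: par.induct)
  case (pbeta t t' u u')
  thus ?case using lift_subst[of 0 k t' u'] by (auto intro: par.intros)
qed (auto intro: par.intros)

lemma par_subst: "par t t' \<Longrightarrow> par u u' \<Longrightarrow> par (subst t k u) (subst t' k u')"
proof (induct arbitrary: k u u' rule: par.induct)
  case (pbeta t t' s s')
  have "par (App (Lam (subst t (Suc k) (lift 0 u))) (subst s k u))
     (subst (subst t' (Suc k) (lift 0 u')) 0 (subst s' k u'))"
    using pbeta by (auto intro!: par.pbeta par_lift)
  thus ?case using subst_subst[of 0 k t' u' s'] by simp
qed (auto intro!: par.intros par_lift simp: par_lift)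

fun cd :: "trm \<Rightarrow> trm" where
  "cd (Var i) = Var i"
| "cd (Lam t) = Lam (cd t)"
| "cd (App (Lam t) u) = subst (cd t) 0 (cd u)"
| "cd (App t u) = App (cd t) (cd u)"
| "cd (Sub t u) = Sub (cd t) (cd u)"

lemma par_cd: "par t s \<Longrightarrow> par s (cd t)"
proof (induct rule: par.induct)
  case (papp t t' u u')
  show ?case
  proof (cases t)
    case (Lam t0)
    with papp obtain t0' where "t' = Lam t0'" "par t0' (cd t0)"
      by (auto elim: par.cases)
    thus ?thesis using papp Lam by (auto intro: par.pbeta)
  qed (use papp in \<open>auto intro: par.intros\<close>)
next
  case (pbeta t t' u u')
  thus ?case by (auto intro: par_subst)
qed (auto intro: par.intros)

lemma par_confluent: "confluentp par"
proof (rule strong_confluentp_imp_confluentp, rule strong_confluentpI)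
  fix t s1 s2 assume "par t s1" "par t s2"
  then show "\<exists>v. par\<^sup>*\<^sup>* s1 v \<and> par\<^sup>=\<^sup>= s2 v" by (blast dest: par_cd)
qed

text \<open>Parallel reduction is simulated by lambda-j: a beta-step is a dB-step with an
  empty list of jumps followed by the execution of the created jump.\<close>
lemma par_lj: "par t t' \<Longrightarrow> lj\<^sup>*\<^sup>* t t'"
proof (induct rule: par.induct)
  case (pbeta t t' u u')
  have "lj\<^sup>*\<^sup>* (App (Lam t) u) (App (Lam t') u')" using pbeta by (intro lj_app_star lj_lam_star)
  also have "lj \<dots> (Sub t' u')" using lj.dB[of t' "[]" u'] by (simp add: jumps_def)
  also have "lj\<^sup>*\<^sup>* \<dots> (subst t' 0 u')" by (rule sub_executes)
  finally show ?case .
qed (auto intro: lj_lam_star lj_app_star lj_sub_star)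

lemma par_lam_star: "par\<^sup>*\<^sup>* t t' \<Longrightarrow> par\<^sup>*\<^sup>* (Lam t) (Lam t')"
  by (rule rtranclp_map[of par]) (auto intro: par.intros)

lemma par_app_star: "par\<^sup>*\<^sup>* t t' \<Longrightarrow> par\<^sup>*\<^sup>* u u' \<Longrightarrow> par\<^sup>*\<^sup>* (App t u) (App t' u')"
  by (rule rtranclp_map2[of par]) (auto intro: par.intros)

lemma par_subst_star:
  "par\<^sup>*\<^sup>* t t' \<Longrightarrow> par\<^sup>*\<^sup>* u u' \<Longrightarrow> par\<^sup>*\<^sup>* (subst t 0 u) (subst t' 0 u')"
  by (rule rtranclp_map2[of par]) (auto intro: par_subst)

text \<open>Simulation of lambda-j in the lambda-calculus: under unfolding, a dB-step becomes
  a beta-step, the jump rules w, d, c become identities, and context steps become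
  parallel reductions.\<close>
lemma lj_par_unf: "lj t s \<Longrightarrow> par\<^sup>*\<^sup>* (unf t) (unf s)"
proof (induct rule: lj.induct)
  case (dB t L u)
  obtain X where "unf (jumps (Lam t) L) = Lam X"
    "unf (jumps (Sub t ((lift 0 ^^ length L) u)) L) = subst X 0 (unf u)"
    using unf_jumps by blast
  thus ?case by (auto intro!: r_into_rtranclp par.pbeta)
next
  case (w t u) thus ?case by (simp add: unf_subst)
next
  case (d t u) thus ?case by (simp add: unf_subst)
next
  case (c t t' u)
  have "unf t = subst (unf t') 1 (Var 0)" using split_collapse[OF c(2)] by (simp add: unf_subst)
  thus ?case using subst_duplicate[of "unf t'" "unf u"] by (simp add: unf_lift)
qed (auto intro: par_lam_star par_app_star par_subst_star)

theorem theorem15: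
  assumes "lj\<^sup>*\<^sup>* t u1" and "lj\<^sup>*\<^sup>* t u2"
  shows "\<exists>v. lj\<^sup>*\<^sup>* u1 v \<and> lj\<^sup>*\<^sup>* u2 v"
proof -
  have "confluentp lj"
    using par_confluent lj_unf lj_par_unf par_lj by (rule confluentp_by_interpretation)
  then show ?thesis using assms by (rule confluentpD)
qed

end
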